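(* Let $d\ge1$ and let $\mu=\prod_{i=1}^d\mu_i$ be a product probability measure on $\mathbb{R}^d$, where for each $i$, $\mathrm{d}\mu_i(x_i)=\rho_i(|x_i|)\,\mathrm{d}x_i$ is a probability measure on $\mathbb{R}$ with $\rho_i:[0,\infty)\to(0,\infty)$ continuous. Let $a_1,\dots,a_d>0$ and $B=\{x\in\mathbb{R}^d: \sum_{i=1}^d x_i^2/a_i^2\le1\}$. Then for every $f\in\bar{\mathcal{C}}_d$, $$\int_{\mathbb{R}^d} f\,\mathbf{1}_B\,\mathrm{d}\mu\ \ge\ \Big(\int_{\mathbb{R}^d} f\,\mathrm{d}\mu\Big)\,\mu(B).$$
   Context: $\mathcal{C}_1$ denotes the set of continuous compactly supported functions $g:\mathbb{R}\to[0,\infty)$ such that for every $c>0$ the set $\{t: g(t)>c\}$ is convex (an interval), and $g(t)\le g(0)$ for all $t\in\mathbb{R}$. $\bar{\mathcal{C}}_d$ denotes the set of continuous compactly supported functions $f:\mathbb{R}^d\to[0,\infty)$ such that for every $i\in\{1,\dots,d\}$ and every fixed choice of the other coordinates $(x_1,\dots,x_{i-1},x_{i+1},\dots,x_d)\in\mathbb{R}^{d-1}$, the one-variable function $x_i\mapsto f(x_1,\dots,x_{i-1},x_i,x_{i+1},\dots,x_d)$ belongs to $\mathcal{C}_1$. *)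

theory Defs
  imports "HOL-Analysis.Analysis"
begin

definition C1 :: "(real \<Rightarrow> real) set" where
  "C1 = {g. continuous_on UNIV g \<and> compact (closure {t. g t \<noteq> 0}) \<and>
            (\<forall>t. 0 \<le> g t) \<and> (\<forall>c>0. convex {t. g t > c}) \<and> (\<forall>t. g t \<le> g 0)}"

definition upd_coord :: "real^'n \<Rightarrow> 'n \<Rightarrow> real \<Rightarrow> real^'n" where
  "upd_coord x i t = (\<chi> j. if j = i then t else x $ j)"

definition Cbar :: "(real^'n \<Rightarrow> real) set" where
  "Cbar = {f. continuous_on UNIV f \<and> compact (closure {x. f x \<noteq> 0}) \<and>
             (\<forall>x. 0 \<le> f x) \<and> (\<forall>i x. (\<lambda>t. f (upd_coord x i t)) \<in> C1)}"

text \<open>Product measure on R^d whose i-th factor is d mu_i = rho_i(|t|) dt: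
  it is Lebesgue measure with the product density.\<close>
definition prod_meas :: "('n::finite \<Rightarrow> real \<Rightarrow> real) \<Rightarrow> (real^'n) measure" where
  "prod_meas \<rho> = density lborel (\<lambda>x. ennreal (\<Prod>i\<in>UNIV. \<rho> i \<bar>x $ i\<bar>))"

definition ellipsoid :: "('n::finite \<Rightarrow> real) \<Rightarrow> (real^'n) set" where
  "ellipsoid a = {x. (\<Sum>i\<in>UNIV. (x $ i)^2 / (a i)^2) \<le> 1}"

end

theory Submission
  imports Defs "HOL-Probability.Probability"
begin

(* The proof is a Harris (FKG-type) inequality for products of symmetric measures.
   (1) One variable: under a symmetric probability measure, a function that is unimodal at 0
       (nondecreasing up to 0, nonincreasing after) and a function that is symmetric decreasing
       (even, nonincreasing in |t|) satisfy E[f] E[g] <= E[f g].  Replacing f by its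
       symmetrization does not change either side, and then this is Chebyshev's integral
       inequality for the two comonotone functions.
   (2) Finite products, by induction on the index set: integrate out one coordinate, apply (1)
       pointwise and the induction hypothesis to the partial integrals, which inherit the
       coordinatewise shapes.
   (3) prod_meas is the image, under the coordinate map, of the product of its one-dimensional
       factors, so (2) transfers to prod_meas on real^'n.
   (4) The sections of f lie in C_1, hence are unimodal at 0, and the indicator of an ellipsoid
       is symmetric decreasing along every coordinate line; the theorem is (3) for these two
       functions. *)

section \<open>Shapes of one-variable functions\<close>

definition unimodal_at0 :: "(real \<Rightarrow> real) \<Rightarrow> bool" where
  "unimodal_at0 g \<longleftrightarrow>
     (\<forall>s t. 0 \<le> s \<longrightarrow> s \<le> t \<longrightarrow> g t \<le> g s) \<and> (\<forall>s t. s \<le> t \<longrightarrow> t \<le> 0 \<longrightarrow> g s \<le> g t)"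

definition symmetric_decreasing :: "(real \<Rightarrow> real) \<Rightarrow> bool" where
  "symmetric_decreasing g \<longleftrightarrow> (\<forall>t. g (- t) = g t) \<and> (\<forall>s t. 0 \<le> s \<longrightarrow> s \<le> t \<longrightarrow> g t \<le> g s)"

text \<open>A function of class C_1 attains its maximum at 0 and has convex superlevel sets, hence it
  decreases away from 0 on both sides.\<close>
lemma C1_unimodal_at0:
  assumes "g \<in> C1"
  shows "unimodal_at0 g"
proof -
  have decreasing: "g t \<le> g s" if st: "0 \<le> s \<and> s \<le> t \<or> t \<le> s \<and> s \<le> 0" for s t
  proof (rule ccontr)
    assume "\<not> g t \<le> g s"
    then have lt: "g s < g t" by simp
    have nonneg: "\<And>u. 0 \<le> g u" and max0: "\<And>u. g u \<le> g 0"
      and convex_level: "\<And>c. c > 0 \<Longrightarrow> convex {u. g u > c}"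
      using assms by (auto simp: C1_def)
    define c where "c = (g s + g t) / 2"
    have "c > 0" using nonneg[of s] lt by (simp add: c_def)
    have t_in: "t \<in> {u. g u > c}" and zero_in: "0 \<in> {u. g u > c}"
      using lt max0[of t] by (auto simp: c_def)
    have "t \<noteq> 0" using st lt by auto
    define r where "r = s / t"
    have "0 \<le> r" "r \<le> 1" using st \<open>t \<noteq> 0\<close> by (auto simp: r_def divide_simps)
    then have "r *\<^sub>R t + (1 - r) *\<^sub>R 0 \<in> {u. g u > c}"
      by (intro convexD[OF convex_level[OF \<open>c > 0\<close>] t_in zero_in]) auto
    moreover have "r * t + (1 - r) * 0 = s" using \<open>t \<noteq> 0\<close> by (simp add: r_def)
    ultimately have "g s > c" by simp
    then show False using lt by (simp add: c_def)
  qed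
  then show ?thesis unfolding unimodal_at0_def by blast
qed

lemma unimodal_symmetrization:
  assumes "unimodal_at0 f"
  shows "symmetric_decreasing (\<lambda>t. (f t + f (- t)) / 2)"
proof -
  have "(f t + f (- t)) / 2 \<le> (f s + f (- s)) / 2" if "0 \<le> s" "s \<le> t" for s t
    using assms that unfolding unimodal_at0_def by (intro divide_right_mono add_mono) auto
  then show ?thesis unfolding symmetric_decreasing_def by (simp add: add.commute)
qed

text \<open>Two symmetric decreasing functions are comonotone: both are nonincreasing in |t|.\<close>
lemma symmetric_decreasing_comonotone:
  assumes u: "symmetric_decreasing u" and v: "symmetric_decreasing v"
  shows "0 \<le> (u s - u t) * (v s - v t)"
proof -
  have abs_eq: "h x = h \<bar>x\<bar>" if "symmetric_decreasing h" for h x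
    using that by (cases "x \<ge> 0") (auto simp: symmetric_decreasing_def)
  have mono_abs: "h y \<le> h x" if "symmetric_decreasing h" "\<bar>x\<bar> \<le> \<bar>y\<bar>" for h x y
    using that abs_eq[OF that(1), of x] abs_eq[OF that(1), of y]
    by (auto simp: symmetric_decreasing_def)
  show ?thesis
  proof (cases "\<bar>s\<bar> \<le> \<bar>t\<bar>")
    case True
    then show ?thesis using mono_abs[OF u] mono_abs[OF v] by (simp add: mult_nonneg_nonneg)
  next
    case False
    then show ?thesis using mono_abs[OF u, of t s] mono_abs[OF v, of t s]
      by (simp add: mult_nonpos_nonpos)
  qed
qed

lemma integrable_bounded:
  fixes h :: "'a \<Rightarrow> real"
  assumes "finite_measure N" "h \<in> borel_measurable N" "\<And>x. x \<in> space N \<Longrightarrow> \<bar>h x\<bar> \<le> C"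
  shows "integrable N h"
  by (rule finite_measure.integrable_const_bound[OF assms(1), where B=C]) (use assms in auto)

lemma abs_integral_bounded:
  fixes h :: "'a \<Rightarrow> real"
  assumes N: "prob_space N" and h: "h \<in> borel_measurable N"
    and bound: "\<And>x. x \<in> space N \<Longrightarrow> \<bar>h x\<bar> \<le> C"
  shows "\<bar>\<integral>x. h x \<partial>N\<bar> \<le> C"
proof -
  have F: "finite_measure N" using N by (simp add: prob_space_def)
  have "\<bar>\<integral>x. h x \<partial>N\<bar> \<le> (\<integral>x. \<bar>h x\<bar> \<partial>N)"
    using integral_norm_bound[of N h] by simp
  also have "\<dots> \<le> (\<integral>x. C \<partial>N)"
    using bound integrable_bounded[OF F h bound]
    by (intro integral_mono finite_measure.integrable_const[OF F]) auto
  also have "\<dots> = C" using prob_space.prob_space[OF N] by simp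
  finally show ?thesis .
qed

lemma abs_mult_bounded:
  fixes x y :: real
  assumes "\<bar>x\<bar> \<le> A" "\<bar>y\<bar> \<le> B"
  shows "\<bar>x * y\<bar> \<le> A * B"
  using assms by (auto simp: abs_mult intro!: mult_mono order_trans[OF abs_ge_zero])

lemma chebyshev_integral_inequality:
  fixes u v :: "'a \<Rightarrow> real"
  assumes N: "prob_space N"
    and [measurable]: "u \<in> borel_measurable N" "v \<in> borel_measurable N"
    and u_bound: "\<And>x. \<bar>u x\<bar> \<le> Cu" and v_bound: "\<And>x. \<bar>v x\<bar> \<le> Cv"
    and comonotone: "\<And>s t. 0 \<le> (u s - u t) * (v s - v t)"
  shows "(\<integral>x. u x \<partial>N) * (\<integral>x. v x \<partial>N) \<le> (\<integral>x. u x * v x \<partial>N)"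
proof -
  have F: "finite_measure N" using N by (simp add: prob_space_def)
  have one: "measure N (space N) = 1" using N by (simp add: prob_space.prob_space)
  have int_u: "integrable N u" by (rule integrable_bounded[OF F, where C=Cu]) (auto intro: u_bound)
  have int_v: "integrable N v" by (rule integrable_bounded[OF F, where C=Cv]) (auto intro: v_bound)
  have int_uv: "integrable N (\<lambda>x. u x * v x)"
    by (rule integrable_bounded[OF F, where C="Cu * Cv"]) (auto intro: abs_mult_bounded u_bound v_bound)
  have int_const: "integrable N (\<lambda>x. c)" for c :: real using finite_measure.integrable_const[OF F] .
  define U V W where "U = (\<integral>x. u x \<partial>N)" and "V = (\<integral>x. v x \<partial>N)" and "W = (\<integral>x. u x * v x \<partial>N)"
  have inner: "(\<integral>t. (u s - u t) * (v s - v t) \<partial>N) = u s * v s - u s * V - v s * U + W" for s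
  proof -
    have "(\<integral>t. (u s - u t) * (v s - v t) \<partial>N) = (\<integral>t. (u s * v s + u t * v t) - (u s * v t + v s * u t) \<partial>N)"
      by (simp add: algebra_simps)
    also have "\<dots> = u s * v s + W - (u s * V + v s * U)"
      using int_u int_v int_uv int_const by (simp add: U_def V_def W_def one)
    finally show ?thesis by simp
  qed
  have "0 \<le> (\<integral>s. (\<integral>t. (u s - u t) * (v s - v t) \<partial>N) \<partial>N)"
    by (auto intro!: Bochner_Integration.integral_nonneg comonotone)
  also have "\<dots> = (\<integral>s. u s * v s - u s * V - v s * U + W \<partial>N)"
    by (simp add: inner)
  also have "\<dots> = 2 * (W - U * V)"
    using int_u int_v int_uv int_const by (simp add: U_def V_def W_def one)
  finally show ?thesis unfolding U_def V_def W_def by simp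
qed

section \<open>The one-dimensional correlation inequality\<close>

lemma symmetric_correlation_1d:
  fixes f g :: "real \<Rightarrow> real"
  assumes N: "prob_space N" and sets_N: "sets N = sets borel" and symmetric: "distr N borel uminus = N"
    and [measurable]: "f \<in> borel_measurable borel" "g \<in> borel_measurable borel"
    and f_bound: "\<And>x. \<bar>f x\<bar> \<le> Cf" and g_bound: "\<And>x. \<bar>g x\<bar> \<le> Cg"
    and f_shape: "unimodal_at0 f" and g_shape: "symmetric_decreasing g"
  shows "(\<integral>x. f x \<partial>N) * (\<integral>x. g x \<partial>N) \<le> (\<integral>x. f x * g x \<partial>N)"
proof -
  have F: "finite_measure N" using N by (simp add: prob_space_def)
  have meas: "h \<in> borel_measurable N" if "h \<in> borel_measurable borel" for h :: "real \<Rightarrow> real"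
    using that sets_N measurable_cong_sets by blast
  have reflect: "(\<integral>x. h (- x) \<partial>N) = (\<integral>x. h x \<partial>N)" if "h \<in> borel_measurable borel" for h :: "real \<Rightarrow> real"
  proof -
    have "(\<integral>x. h x \<partial>N) = (\<integral>x. h x \<partial>distr N borel uminus)" using symmetric by simp
    also have "\<dots> = (\<integral>x. h (- x) \<partial>N)" by (rule integral_distr[OF meas that]) simp
    finally show ?thesis by simp
  qed
  have g_even: "g (- x) = g x" for x using g_shape by (simp add: symmetric_decreasing_def)
  text \<open>The symmetrization of f has the same integral and the same correlation with g.\<close>
  define fs where "fs t = (f t + f (- t)) / 2" for t
  have fs_bound: "\<bar>fs x\<bar> \<le> Cf" for x unfolding fs_def using f_bound[of x] f_bound[of "- x"] by auto
  have int_f: "integrable N (\<lambda>x. f (c * x))" for c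
    by (rule integrable_bounded[OF F, where C=Cf]) (auto simp: meas intro: f_bound)
  have int_fg: "integrable N (\<lambda>x. f (c * x) * g x)" for c
    by (rule integrable_bounded[OF F, where C="Cf * Cg"])
       (auto simp: meas intro: abs_mult_bounded f_bound g_bound)
  have "(\<integral>x. fs x \<partial>N) = ((\<integral>x. f x \<partial>N) + (\<integral>x. f (- x) \<partial>N)) / 2"
    unfolding fs_def using int_f[of 1] int_f[of "-1"] by simp
  then have int_fs: "(\<integral>x. fs x \<partial>N) = (\<integral>x. f x \<partial>N)"
    using reflect[of f] by simp
  have "(\<integral>x. fs x * g x \<partial>N) = ((\<integral>x. f x * g x \<partial>N) + (\<integral>x. f (- x) * g x \<partial>N)) / 2"
    unfolding fs_def using int_fg[of 1] int_fg[of "-1"] by (simp add: add_divide_distrib distrib_right)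
  then have int_fsg: "(\<integral>x. fs x * g x \<partial>N) = (\<integral>x. f x * g x \<partial>N)"
    using reflect[of "\<lambda>x. f x * g x"] by (simp add: g_even)
  have "(\<integral>x. fs x \<partial>N) * (\<integral>x. g x \<partial>N) \<le> (\<integral>x. fs x * g x \<partial>N)"
  proof (rule chebyshev_integral_inequality[OF N _ _ fs_bound g_bound])
    show "fs \<in> borel_measurable N" "g \<in> borel_measurable N" unfolding fs_def by (simp_all add: meas)
    show "0 \<le> (fs s - fs t) * (g s - g t)" for s t
      using symmetric_decreasing_comonotone[OF unimodal_symmetrization[OF f_shape] g_shape]
      unfolding fs_def .
  qed
  then show ?thesis using int_fs int_fsg by simp
qed

section \<open>Integrating out one coordinate\<close>

text \<open>Integration preserves pointwise inequalities between members of a bounded family, so the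
  integrals of a family of functions of t inherit unimodality and symmetric monotonicity.\<close>
lemma integral_family_mono:
  fixes h :: "real \<Rightarrow> 'a \<Rightarrow> real"
  assumes N: "prob_space N" and meas: "\<And>t. h t \<in> borel_measurable N"
    and bound: "\<And>t y. y \<in> space N \<Longrightarrow> \<bar>h t y\<bar> \<le> C"
    and le: "\<And>y. y \<in> space N \<Longrightarrow> h t y \<le> h s y"
  shows "(\<integral>y. h t y \<partial>N) \<le> (\<integral>y. h s y \<partial>N)"
  using N le by (intro integral_mono integrable_bounded[OF _ meas bound]) (auto simp: prob_space_def)

lemma integral_family_unimodal:
  fixes h :: "real \<Rightarrow> 'a \<Rightarrow> real"
  assumes N: "prob_space N" and meas: "\<And>t. h t \<in> borel_measurable N"
    and bound: "\<And>t y. y \<in> space N \<Longrightarrow> \<bar>h t y\<bar> \<le> C"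
    and shape: "\<And>y. y \<in> space N \<Longrightarrow> unimodal_at0 (\<lambda>t. h t y)"
  shows "unimodal_at0 (\<lambda>t. \<integral>y. h t y \<partial>N)"
  unfolding unimodal_at0_def
  using shape by (auto intro!: integral_family_mono[OF N meas bound] simp: unimodal_at0_def)

lemma integral_family_symmetric_decreasing:
  fixes h :: "real \<Rightarrow> 'a \<Rightarrow> real"
  assumes N: "prob_space N" and meas: "\<And>t. h t \<in> borel_measurable N"
    and bound: "\<And>t y. y \<in> space N \<Longrightarrow> \<bar>h t y\<bar> \<le> C"
    and shape: "\<And>y. y \<in> space N \<Longrightarrow> symmetric_decreasing (\<lambda>t. h t y)"
  shows "symmetric_decreasing (\<lambda>t. \<integral>y. h t y \<partial>N)"
proof -
  have "(\<integral>y. h (- t) y \<partial>N) = (\<integral>y. h t y \<partial>N)" for t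
    using shape by (intro Bochner_Integration.integral_cong) (auto simp: symmetric_decreasing_def)
  then show ?thesis
    using shape unfolding symmetric_decreasing_def
    by (auto intro!: integral_family_mono[OF N meas bound] simp: symmetric_decreasing_def)
qed

context
  fixes M :: "'i \<Rightarrow> real measure"
  assumes prob_M: "\<And>i. prob_space (M i)" and sets_M: "\<And>i. sets (M i) = sets borel"
begin

lemma space_PiM_update:
  "x \<in> space (PiM I M) \<Longrightarrow> x(i := y) \<in> space (PiM (insert i I) M)"
  using sets_eq_imp_space_eq[OF sets_M] by (auto simp: space_PiM PiE_def extensional_def)

lemma space_PiM_update_member:
  "x \<in> space (PiM I M) \<Longrightarrow> j \<in> I \<Longrightarrow> x(j := y) \<in> space (PiM I M)"
  using space_PiM_update[of x I j y] by (simp add: insert_absorb)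

lemma section_measurable:
  assumes "i \<notin> I" "F \<in> borel_measurable (PiM (insert i I) M)" "x \<in> space (PiM I M)"
  shows "(\<lambda>y. F (x(i := y))) \<in> borel_measurable (M i)"
  using measurable_comp[OF measurable_component_update[OF assms(3,1)] assms(2)]
  by (simp add: comp_def)

lemma partial_integral_measurable:
  fixes F :: "('i \<Rightarrow> real) \<Rightarrow> real"
  assumes "F \<in> borel_measurable (PiM (insert i I) M)"
  shows "(\<lambda>x. \<integral>y. F (x(i := y)) \<partial>M i) \<in> borel_measurable (PiM I M)"
proof (rule sigma_finite_measure.borel_measurable_lebesgue_integral)
  show "sigma_finite_measure (M i)" using prob_M prob_space_imp_sigma_finite by blast
  show "(\<lambda>(x, y). F (x(i := y))) \<in> borel_measurable (PiM I M \<Otimes>\<^sub>M M i)"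
    using measurable_comp[OF measurable_add_dim assms] by (simp add: comp_def case_prod_beta')
qed

lemma partial_integral_unimodal:
  fixes F :: "('i \<Rightarrow> real) \<Rightarrow> real"
  assumes i: "i \<notin> I" and j: "j \<in> I" and x: "x \<in> space (PiM I M)"
    and F: "F \<in> borel_measurable (PiM (insert i I) M)" and bound: "\<And>x. x \<in> space (PiM (insert i I) M) \<Longrightarrow> \<bar>F x\<bar> \<le> C"
    and shape: "\<And>x. x \<in> space (PiM (insert i I) M) \<Longrightarrow> unimodal_at0 (\<lambda>t. F (x(j := t)))"
  shows "unimodal_at0 (\<lambda>t. \<integral>y. F (x(j := t, i := y)) \<partial>M i)"
proof (rule integral_family_unimodal[OF prob_M])
  show "(\<lambda>y. F (x(j := t, i := y))) \<in> borel_measurable (M i)" for t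
    by (rule section_measurable[OF i F space_PiM_update_member[OF x j]])
  show "\<bar>F (x(j := t, i := y))\<bar> \<le> C" if "y \<in> space (M i)" for t y
    by (rule bound[OF space_PiM_update[OF space_PiM_update_member[OF x j]]])
  have "x(j := t, i := y) = x(i := y, j := t)" for t y using i j by (auto simp: fun_eq_iff)
  then show "unimodal_at0 (\<lambda>t. F (x(j := t, i := y)))" for y
    using shape[OF space_PiM_update[OF x]] by simp
qed

lemma partial_integral_symmetric_decreasing:
  fixes G :: "('i \<Rightarrow> real) \<Rightarrow> real"
  assumes i: "i \<notin> I" and j: "j \<in> I" and x: "x \<in> space (PiM I M)"
    and G: "G \<in> borel_measurable (PiM (insert i I) M)" and bound: "\<And>x. x \<in> space (PiM (insert i I) M) \<Longrightarrow> \<bar>G x\<bar> \<le> C"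
    and shape: "\<And>x. x \<in> space (PiM (insert i I) M) \<Longrightarrow> symmetric_decreasing (\<lambda>t. G (x(j := t)))"
  shows "symmetric_decreasing (\<lambda>t. \<integral>y. G (x(j := t, i := y)) \<partial>M i)"
proof (rule integral_family_symmetric_decreasing[OF prob_M])
  show "(\<lambda>y. G (x(j := t, i := y))) \<in> borel_measurable (M i)" for t
    by (rule section_measurable[OF i G space_PiM_update_member[OF x j]])
  show "\<bar>G (x(j := t, i := y))\<bar> \<le> C" if "y \<in> space (M i)" for t y
    by (rule bound[OF space_PiM_update[OF space_PiM_update_member[OF x j]]])
  have "x(j := t, i := y) = x(i := y, j := t)" for t y using i j by (auto simp: fun_eq_iff)
  then show "symmetric_decreasing (\<lambda>t. G (x(j := t, i := y)))" for y
    using shape[OF space_PiM_update[OF x]] by simp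
qed

lemma partial_integral_bounded:
  fixes H :: "('i \<Rightarrow> real) \<Rightarrow> real"
  assumes i: "i \<notin> I" and H: "H \<in> borel_measurable (PiM (insert i I) M)"
    and bound: "\<And>x. x \<in> space (PiM (insert i I) M) \<Longrightarrow> \<bar>H x\<bar> \<le> C" and x: "x \<in> space (PiM I M)"
  shows "\<bar>\<integral>y. H (x(i := y)) \<partial>M i\<bar> \<le> C"
  using bound space_PiM_update[OF x]
  by (intro abs_integral_bounded[OF prob_M] section_measurable[OF i H x]) auto

lemma product_integral_insert_bounded:
  fixes H :: "('i \<Rightarrow> real) \<Rightarrow> real"
  assumes I: "finite I" "i \<notin> I" and H: "H \<in> borel_measurable (PiM (insert i I) M)"
    and bound: "\<And>x. x \<in> space (PiM (insert i I) M) \<Longrightarrow> \<bar>H x\<bar> \<le> C"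
  shows "(\<integral>x. H x \<partial>PiM (insert i I) M) = (\<integral>x. (\<integral>y. H (x(i := y)) \<partial>M i) \<partial>PiM I M)"
proof (rule product_sigma_finite.product_integral_insert[OF _ I])
  show "product_sigma_finite M"
    unfolding product_sigma_finite_def using prob_M prob_space_imp_sigma_finite by blast
  have "prob_space (PiM (insert i I) M)" using prob_M by (auto intro: prob_space_PiM)
  then show "integrable (PiM (insert i I) M) H"
    by (rule integrable_bounded[OF prob_space.finite_measure H bound])
qed

lemma correlation_in_new_coordinate:
  fixes F G :: "('i \<Rightarrow> real) \<Rightarrow> real"
  assumes symmetric: "distr (M i) borel uminus = M i" and i: "i \<notin> I" and x: "x \<in> space (PiM I M)"
    and F: "F \<in> borel_measurable (PiM (insert i I) M)" and G: "G \<in> borel_measurable (PiM (insert i I) M)"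
    and F_bound: "\<And>x. x \<in> space (PiM (insert i I) M) \<Longrightarrow> \<bar>F x\<bar> \<le> CF"
    and G_bound: "\<And>x. x \<in> space (PiM (insert i I) M) \<Longrightarrow> \<bar>G x\<bar> \<le> CG"
    and F_shape: "\<And>x. x \<in> space (PiM (insert i I) M) \<Longrightarrow> unimodal_at0 (\<lambda>t. F (x(i := t)))"
    and G_shape: "\<And>x. x \<in> space (PiM (insert i I) M) \<Longrightarrow> symmetric_decreasing (\<lambda>t. G (x(i := t)))"
  shows "(\<integral>y. F (x(i := y)) \<partial>M i) * (\<integral>y. G (x(i := y)) \<partial>M i)
    \<le> (\<integral>y. F (x(i := y)) * G (x(i := y)) \<partial>M i)"
proof (rule symmetric_correlation_1d[OF prob_M sets_M symmetric])
  show "(\<lambda>y. F (x(i := y))) \<in> borel_measurable borel" "(\<lambda>y. G (x(i := y))) \<in> borel_measurable borel"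
    using section_measurable[OF i F x] section_measurable[OF i G x] sets_M measurable_cong_sets
    by blast+
  show "\<bar>F (x(i := y))\<bar> \<le> CF" for y by (rule F_bound[OF space_PiM_update[OF x]])
  show "\<bar>G (x(i := y))\<bar> \<le> CG" for y by (rule G_bound[OF space_PiM_update[OF x]])
  have x0: "x(i := 0) \<in> space (PiM (insert i I) M)" by (rule space_PiM_update[OF x])
  have reset: "\<And>y. x(i := 0, i := y) = x(i := y)" by simp
  show "unimodal_at0 (\<lambda>y. F (x(i := y)))" using F_shape[OF x0] unfolding reset .
  show "symmetric_decreasing (\<lambda>y. G (x(i := y)))" using G_shape[OF x0] unfolding reset .
qed

section \<open>Harris inequality for products of symmetric measures\<close>

lemma harris_inequality:
  fixes F G :: "('i \<Rightarrow> real) \<Rightarrow> real"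
  assumes symmetric: "\<And>i. distr (M i) borel uminus = M i" and "finite I"
    and "F \<in> borel_measurable (PiM I M)" "G \<in> borel_measurable (PiM I M)"
    and "\<And>x. x \<in> space (PiM I M) \<Longrightarrow> \<bar>F x\<bar> \<le> CF"
    and "\<And>x. x \<in> space (PiM I M) \<Longrightarrow> \<bar>G x\<bar> \<le> CG"
    and "\<And>i x. i \<in> I \<Longrightarrow> x \<in> space (PiM I M) \<Longrightarrow> unimodal_at0 (\<lambda>t. F (x(i := t)))"
    and "\<And>i x. i \<in> I \<Longrightarrow> x \<in> space (PiM I M) \<Longrightarrow> symmetric_decreasing (\<lambda>t. G (x(i := t)))"
  shows "(\<integral>x. F x \<partial>PiM I M) * (\<integral>x. G x \<partial>PiM I M) \<le> (\<integral>x. F x * G x \<partial>PiM I M)"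
  using assms(2-)
proof (induction I arbitrary: F G CF CG rule: finite_induct)
  case empty
  then show ?case by (simp add: PiM_empty lebesgue_integral_count_space_finite)
next
  case (insert i I)
  note F = insert.prems(1) and G = insert.prems(2)
    and F_bound = insert.prems(3) and G_bound = insert.prems(4)
  have prob_I: "prob_space (PiM I M)" using prob_M by (auto intro: prob_space_PiM)
  have FG: "(\<lambda>x. F x * G x) \<in> borel_measurable (PiM (insert i I) M)" using F G by simp
  have FG_bound: "\<bar>F x * G x\<bar> \<le> CF * CG" if "x \<in> space (PiM (insert i I) M)" for x
    by (rule abs_mult_bounded[OF F_bound[OF that] G_bound[OF that]])
  define Fi Gi FGi
    where "Fi x = (\<integral>y. F (x(i := y)) \<partial>M i)" and "Gi x = (\<integral>y. G (x(i := y)) \<partial>M i)"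
      and "FGi x = (\<integral>y. F (x(i := y)) * G (x(i := y)) \<partial>M i)" for x
  have Fi: "Fi \<in> borel_measurable (PiM I M)" and Gi: "Gi \<in> borel_measurable (PiM I M)"
    and FGi: "FGi \<in> borel_measurable (PiM I M)"
    unfolding Fi_def Gi_def FGi_def
    using partial_integral_measurable[OF F] partial_integral_measurable[OF G]
      partial_integral_measurable[OF FG] by (simp_all only:)
  have Fi_bound: "\<bar>Fi x\<bar> \<le> CF" and Gi_bound: "\<bar>Gi x\<bar> \<le> CG" and FGi_bound: "\<bar>FGi x\<bar> \<le> CF * CG"
    if "x \<in> space (PiM I M)" for x
    unfolding Fi_def Gi_def FGi_def
    using partial_integral_bounded[OF insert(2) F F_bound that]
      partial_integral_bounded[OF insert(2) G G_bound that]
      partial_integral_bounded[OF insert(2) FG FG_bound that] by (simp_all only:)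
  have pointwise: "Fi x * Gi x \<le> FGi x" if "x \<in> space (PiM I M)" for x
    unfolding Fi_def Gi_def FGi_def
    using insert.prems(5,6)
    by (intro correlation_in_new_coordinate[OF symmetric insert(2) that F G F_bound G_bound]) auto
  text \<open>The partial integrals inherit the shapes in the remaining coordinates.\<close>
  have "(\<integral>x. Fi x \<partial>PiM I M) * (\<integral>x. Gi x \<partial>PiM I M) \<le> (\<integral>x. Fi x * Gi x \<partial>PiM I M)"
  proof (rule insert.IH[OF Fi Gi Fi_bound Gi_bound])
    show "unimodal_at0 (\<lambda>t. Fi (x(j := t)))" if "j \<in> I" "x \<in> space (PiM I M)" for j x
      unfolding Fi_def
      using that by (intro partial_integral_unimodal[OF insert(2) that F F_bound] insert.prems(5)) auto
    show "symmetric_decreasing (\<lambda>t. Gi (x(j := t)))" if "j \<in> I" "x \<in> space (PiM I M)" for j x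
      unfolding Gi_def
      using that
      by (intro partial_integral_symmetric_decreasing[OF insert(2) that G G_bound] insert.prems(6)) auto
  qed
  also have "\<dots> \<le> (\<integral>x. FGi x \<partial>PiM I M)"
    using pointwise Fi_bound Gi_bound FGi_bound Fi Gi FGi
    by (intro integral_mono integrable_bounded[OF prob_space.finite_measure[OF prob_I]])
       (auto intro: abs_mult_bounded)
  finally show ?case
    using product_integral_insert_bounded[OF insert(1,2) F F_bound]
      product_integral_insert_bounded[OF insert(1,2) G G_bound]
      product_integral_insert_bounded[OF insert(1,2) FG FG_bound]
    unfolding Fi_def Gi_def FGi_def by (simp only:)
qed

end


section \<open>Product measures with densities\<close>

lemma indicator_PiE_prod:
  assumes "finite I" "f \<in> extensional I"
  shows "(indicator (PiE I A) f :: ennreal) = (\<Prod>i\<in>I. indicator (A i) (f i))"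
proof (cases "\<forall>i\<in>I. f i \<in> A i")
  case True
  then show ?thesis using assms by (auto simp: indicator_def PiE_def)
next
  case False
  then obtain i where "i \<in> I" "f i \<notin> A i" by auto
  then have "(\<Prod>i\<in>I. indicator (A i) (f i) :: ennreal) = 0"
    using assms(1) by (intro prod_zero) (auto intro!: bexI[of _ i])
  moreover have "f \<notin> PiE I A" using \<open>i \<in> I\<close> \<open>f i \<notin> A i\<close> by (auto simp: PiE_def)
  ultimately show ?thesis by simp
qed

lemma PiM_density_lborel:
  fixes w :: "'i \<Rightarrow> real \<Rightarrow> ennreal"
  assumes I: "finite I" and w: "\<And>i. w i \<in> borel_measurable borel"
    and sigma_finite: "\<And>i. sigma_finite_measure (density lborel (w i))"
  shows "PiM I (\<lambda>i. density lborel (w i)) = density (PiM I (\<lambda>_. lborel)) (\<lambda>f. \<Prod>i\<in>I. w i (f i))"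
proof (rule sym, rule product_sigma_finite.PiM_eqI[OF _ I])
  show "product_sigma_finite (\<lambda>i. density lborel (w i))"
    unfolding product_sigma_finite_def using sigma_finite by blast
  show "sets (density (PiM I (\<lambda>_. lborel)) (\<lambda>f. \<Prod>i\<in>I. w i (f i))) = sets (PiM I (\<lambda>i. density lborel (w i)))"
    by (simp cong: sets_PiM_cong)
  fix A assume "\<And>i. i \<in> I \<Longrightarrow> A i \<in> sets (density lborel (w i))"
  then have A: "\<And>i. i \<in> I \<Longrightarrow> A i \<in> sets borel" by simp
  have product_lborel: "product_sigma_finite (\<lambda>_::'i. lborel :: real measure)"
    by (simp add: product_sigma_finite_def sigma_finite_lborel)
  have density_meas: "(\<lambda>f. \<Prod>i\<in>I. w i (f i)) \<in> borel_measurable (PiM I (\<lambda>_. lborel))"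
    using w by measurable
  have "emeasure (density (PiM I (\<lambda>_. lborel)) (\<lambda>f. \<Prod>i\<in>I. w i (f i))) (PiE I A)
      = (\<integral>\<^sup>+ f. (\<Prod>i\<in>I. w i (f i)) * indicator (PiE I A) f \<partial>PiM I (\<lambda>_. lborel))"
    using A by (intro emeasure_density density_meas sets_PiM_I_finite I) auto
  also have "\<dots> = (\<integral>\<^sup>+ f. (\<Prod>i\<in>I. w i (f i) * indicator (A i) (f i)) \<partial>PiM I (\<lambda>_. lborel))"
  proof (rule nn_integral_cong)
    fix f assume "f \<in> space (PiM I (\<lambda>_. lborel :: real measure))"
    then have "f \<in> extensional I" by (simp add: space_PiM PiE_def)
    then show "(\<Prod>i\<in>I. w i (f i)) * indicator (PiE I A) f = (\<Prod>i\<in>I. w i (f i) * indicator (A i) (f i))"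
      by (simp add: indicator_PiE_prod[OF I] prod.distrib)
  qed
  also have "\<dots> = (\<Prod>i\<in>I. \<integral>\<^sup>+ t. w i t * indicator (A i) t \<partial>lborel)"
    by (rule product_sigma_finite.product_nn_integral_prod[OF product_lborel I]) (use A w in auto)
  also have "\<dots> = (\<Prod>i\<in>I. emeasure (density lborel (w i)) (A i))"
    using A w by (intro prod.cong refl) (simp add: emeasure_density)
  finally show "emeasure (density (PiM I (\<lambda>_. lborel)) (\<lambda>f. \<Prod>i\<in>I. w i (f i))) (PiE I A)
      = (\<Prod>i\<in>I. emeasure (density lborel (w i)) (A i))" .
qed

lemma density_lborel_symmetric:
  fixes w :: "real \<Rightarrow> ennreal"
  assumes [measurable]: "w \<in> borel_measurable borel" and even: "\<And>t. w (- t) = w t"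
  shows "distr (density lborel w) borel uminus = density lborel w"
proof -
  have "density lborel w = density (distr lborel borel uminus) w" by (simp add: lborel_distr_uminus)
  also have "\<dots> = distr (density lborel (\<lambda>t. w (- t))) borel uminus"
    by (rule density_distr) auto
  also have "(\<lambda>t. w (- t)) = w" using even by auto
  finally show ?thesis by (rule sym)
qed


definition basis_sum :: "(real^'n \<Rightarrow> real) \<Rightarrow> real^'n" where
  "basis_sum f = (\<Sum>b\<in>Basis. f b *\<^sub>R b)"

lemma basis_sum_nth: "basis_sum f $ i = f (axis i 1)"
proof -
  have "basis_sum f $ i = (\<Sum>b\<in>Basis. f b * (b \<bullet> axis i 1))"
    unfolding basis_sum_def cart_eq_inner_axis[of _ i] by (simp add: inner_sum_left)
  also have "\<dots> = (\<Sum>b\<in>Basis. if b = axis i 1 then f b else 0)"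
    by (intro sum.cong refl) (auto simp: inner_Basis)
  also have "\<dots> = f (axis i 1)" by (simp add: sum.delta')
  finally show ?thesis .
qed

lemma basis_sum_update:
  assumes b: "b \<in> Basis"
  shows "basis_sum (f(b := t)) = upd_coord (basis_sum f) (axis_index b) t"
proof -
  have axis_iff: "axis k 1 = b \<longleftrightarrow> k = axis_index b" for k
    using axis_index[OF b] by (metis axis_eq_axis zero_neq_one)
  show ?thesis
    unfolding vec_eq_iff[of "basis_sum (f(b := t))"] by (simp add: basis_sum_nth upd_coord_def axis_iff)
qed

lemma basis_sum_measurable:
  assumes "\<And>b. sets (M b) = sets borel"
  shows "basis_sum \<in> measurable (PiM Basis M) (borel :: (real^'n) measure)"
proof -
  have "basis_sum \<in> measurable (PiM Basis (\<lambda>_. lborel)) (borel :: (real^'n) measure)"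
    unfolding basis_sum_def by measurable
  moreover have "sets (PiM Basis (\<lambda>_. lborel :: real measure)) = sets (PiM Basis M)"
    using assms by (intro sets_PiM_cong) auto
  ultimately show ?thesis using measurable_cong_sets by blast
qed

section \<open>The product measure as an image of a product over the basis\<close>

definition factor_measure :: "('n::finite \<Rightarrow> real \<Rightarrow> real) \<Rightarrow> real^'n \<Rightarrow> real measure" where
  "factor_measure \<rho> b = density lborel (\<lambda>t. ennreal (\<rho> (axis_index b) \<bar>t\<bar>))"

lemma prod_meas_eq_distr:
  fixes \<rho> :: "'n::finite \<Rightarrow> real \<Rightarrow> real"
  assumes meas: "\<And>i. (\<lambda>t. \<rho> i \<bar>t\<bar>) \<in> borel_measurable borel"
    and nonneg: "\<And>i t. 0 \<le> \<rho> i \<bar>t\<bar>" and prob: "\<And>b. prob_space (factor_measure \<rho> b)"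
  shows "prod_meas \<rho> = distr (PiM Basis (factor_measure \<rho>)) borel basis_sum"
proof -
  define w where "w b t = ennreal (\<rho> (axis_index b) \<bar>t\<bar>)" for b :: "real^'n" and t
  have w_meas: "w b \<in> borel_measurable borel" for b unfolding w_def using meas by simp
  have basis_lborel: "basis_sum \<in> measurable (PiM Basis (\<lambda>_. lborel)) (borel :: (real^'n) measure)"
    by (rule basis_sum_measurable) simp
  have density_meas: "(\<lambda>x::real^'n. ennreal (\<Prod>i\<in>UNIV. \<rho> i \<bar>x $ i\<bar>)) \<in> borel_measurable borel"
    using measurable_compose[OF _ meas] by measurable
  have reindex: "(\<Prod>i\<in>UNIV. \<rho> i \<bar>basis_sum f $ i\<bar>) = (\<Prod>b\<in>Basis. \<rho> (axis_index b) \<bar>f b\<bar>)" for f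
  proof -
    have basis: "(Basis :: (real^'n) set) = range (\<lambda>i. axis i 1)" by (auto simp: Basis_vec_def)
    have "inj (\<lambda>i::'n. axis i (1::real))" by (auto simp: inj_def axis_eq_axis)
    then show ?thesis unfolding basis by (simp add: basis_sum_nth prod.reindex)
  qed
  have "prod_meas \<rho> = density (distr (PiM Basis (\<lambda>_. lborel)) borel basis_sum)
      (\<lambda>x::real^'n. ennreal (\<Prod>i\<in>UNIV. \<rho> i \<bar>x $ i\<bar>))"
    unfolding prod_meas_def basis_sum_def by (subst lborel_eq) simp
  also have "\<dots> = distr (density (PiM Basis (\<lambda>_. lborel))
      (\<lambda>f. ennreal (\<Prod>i\<in>UNIV. \<rho> i \<bar>basis_sum f $ i\<bar>))) borel basis_sum"
    by (rule density_distr[OF density_meas basis_lborel])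
  also have "(\<lambda>f. ennreal (\<Prod>i\<in>UNIV. \<rho> i \<bar>basis_sum f $ i\<bar>)) = (\<lambda>f. \<Prod>b\<in>Basis. w b (f b))"
    by (simp add: reindex w_def prod_ennreal nonneg)
  also have "density (PiM Basis (\<lambda>_. lborel)) (\<lambda>f. \<Prod>b\<in>Basis. w b (f b)) = PiM Basis (factor_measure \<rho>)"
    unfolding factor_measure_def w_def[symmetric]
    using prob[unfolded factor_measure_def w_def[symmetric]] w_meas
    by (intro PiM_density_lborel[symmetric] finite_Basis prob_space_imp_sigma_finite)
  finally show ?thesis .
qed

lemma harris_inequality_prod_meas:
  fixes \<rho> :: "'n::finite \<Rightarrow> real \<Rightarrow> real" and F G :: "real^'n \<Rightarrow> real"
  assumes rho_meas: "\<And>i. (\<lambda>t. \<rho> i \<bar>t\<bar>) \<in> borel_measurable borel"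
    and rho_nonneg: "\<And>i t. 0 \<le> t \<Longrightarrow> 0 \<le> \<rho> i t"
    and rho_prob: "\<And>i. emeasure (density lborel (\<lambda>t. ennreal (\<rho> i \<bar>t\<bar>))) UNIV = 1"
    and [measurable]: "F \<in> borel_measurable borel" "G \<in> borel_measurable borel"
    and F_bound: "\<And>x. \<bar>F x\<bar> \<le> CF" and G_bound: "\<And>x. \<bar>G x\<bar> \<le> CG"
    and F_shape: "\<And>i x. unimodal_at0 (\<lambda>t. F (upd_coord x i t))"
    and G_shape: "\<And>i x. symmetric_decreasing (\<lambda>t. G (upd_coord x i t))"
  shows "(\<integral>x. F x \<partial>prod_meas \<rho>) * (\<integral>x. G x \<partial>prod_meas \<rho>) \<le> (\<integral>x. F x * G x \<partial>prod_meas \<rho>)"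
proof -
  let ?N = "PiM Basis (factor_measure \<rho>)"
  have prob: "prob_space (factor_measure \<rho> b)" for b
    by (rule prob_spaceI) (use rho_prob in \<open>simp add: factor_measure_def\<close>)
  have sets: "sets (factor_measure \<rho> b) = sets borel" for b by (simp add: factor_measure_def)
  have symmetric: "distr (factor_measure \<rho> b) borel uminus = factor_measure \<rho> b" for b
    unfolding factor_measure_def using rho_meas by (intro density_lborel_symmetric) auto
  have [measurable]: "basis_sum \<in> measurable ?N borel" by (rule basis_sum_measurable[OF sets])
  have "(\<integral>x. F (basis_sum x) \<partial>?N) * (\<integral>x. G (basis_sum x) \<partial>?N) \<le> (\<integral>x. F (basis_sum x) * G (basis_sum x) \<partial>?N)"
    using F_bound G_bound F_shape G_shape
    by (intro harris_inequality[where M="factor_measure \<rho>", OF prob sets symmetric finite_Basis])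
       (simp_all add: basis_sum_update)
  moreover have "prod_meas \<rho> = distr ?N borel basis_sum"
    using rho_nonneg by (intro prod_meas_eq_distr[OF rho_meas _ prob]) simp
  ultimately show ?thesis by (simp add: integral_distr)
qed

lemma compact_support_bounded:
  fixes f :: "'a::topological_space \<Rightarrow> real"
  assumes f: "continuous_on UNIV f" and K: "compact (closure {x. f x \<noteq> 0})"
  shows "\<exists>C. \<forall>x. \<bar>f x\<bar> \<le> C"
proof -
  let ?K = "closure {x. f x \<noteq> 0}"
  have "compact (f ` ?K)" by (rule compact_continuous_image[OF continuous_on_subset[OF f subset_UNIV] K])
  then have "bounded (f ` ?K)" by (rule compact_imp_bounded)
  then obtain C where C: "\<And>y. y \<in> f ` ?K \<Longrightarrow> norm y \<le> C" unfolding bounded_iff by blast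
  have "\<bar>f x\<bar> \<le> \<bar>C\<bar>" for x
  proof (cases "x \<in> ?K")
    case True
    then show ?thesis using C[of "f x"] by auto
  next
    case False
    then have "x \<notin> {x. f x \<noteq> 0}" by (rule contra_subsetD[OF closure_subset])
    then show ?thesis by simp
  qed
  then show ?thesis by blast
qed

lemma continuous_profile_measurable:
  fixes g :: "real \<Rightarrow> real"
  assumes "continuous_on {0..} g"
  shows "(\<lambda>t. g \<bar>t\<bar>) \<in> borel_measurable borel"
  by (intro borel_measurable_continuous_onI continuous_on_compose2[OF assms])
     (auto intro!: continuous_intros)

lemma ellipsoid_borel:
  assumes "\<And>i. a i \<noteq> 0"
  shows "ellipsoid a \<in> sets borel"
  unfolding ellipsoid_def using assms
  by (intro borel_closed closed_Collect_le continuous_intros) simp_all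

lemma ellipsoid_section_symmetric_decreasing:
  "symmetric_decreasing (\<lambda>t. indicator (ellipsoid a) (upd_coord y i t) :: real)"
proof -
  define rest where "rest = (\<Sum>k\<in>UNIV - {i}. (y $ k)^2 / (a k)^2)"
  have member: "upd_coord y i t \<in> ellipsoid a \<longleftrightarrow> t^2 / (a i)^2 + rest \<le> 1" for t
  proof -
    have "(\<Sum>k\<in>UNIV. (upd_coord y i t $ k)^2 / (a k)^2)
        = t^2 / (a i)^2 + (\<Sum>k\<in>UNIV - {i}. (upd_coord y i t $ k)^2 / (a k)^2)"
      by (subst sum.remove[of _ i]) (auto simp: upd_coord_def)
    also have "(\<Sum>k\<in>UNIV - {i}. (upd_coord y i t $ k)^2 / (a k)^2) = rest"
      unfolding rest_def by (intro sum.cong refl) (auto simp: upd_coord_def)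
    finally show ?thesis by (simp add: ellipsoid_def)
  qed
  have mono: "s^2 / (a i)^2 \<le> t^2 / (a i)^2" if "0 \<le> s" "s \<le> t" for s t :: real
    using that by (intro divide_right_mono power_mono) auto
  show ?thesis
    unfolding symmetric_decreasing_def indicator_def member
  proof (intro conjI allI impI)
    show "(of_bool ((- t)^2 / (a i)^2 + rest \<le> 1) :: real) = of_bool (t^2 / (a i)^2 + rest \<le> 1)"
      for t by simp
    show "(of_bool (t^2 / (a i)^2 + rest \<le> 1) :: real) \<le> of_bool (s^2 / (a i)^2 + rest \<le> 1)"
      if "0 \<le> s" "s \<le> t" for s t
      using mono[OF that] by auto
  qed
qed

theorem theorem3p1:
  fixes \<rho> :: "'n::finite \<Rightarrow> real \<Rightarrow> real" and a :: "'n \<Rightarrow> real" and f :: "real^'n \<Rightarrow> real"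
  assumes rho_cont: "\<And>i. continuous_on {0..} (\<rho> i)"
    and rho_pos: "\<And>i t. t \<ge> 0 \<Longrightarrow> \<rho> i t > 0"
    and rho_prob: "\<And>i. emeasure (density lborel (\<lambda>t. ennreal (\<rho> i \<bar>t\<bar>))) UNIV = 1"
    and a_pos: "\<And>i. a i > 0"
    and f_in: "f \<in> Cbar"
  shows "(\<integral>x. f x * indicator (ellipsoid a) x \<partial>prod_meas \<rho>)
           \<ge> (\<integral>x. f x \<partial>prod_meas \<rho>) * measure (prod_meas \<rho>) (ellipsoid a)"
proof -
  let ?E = "ellipsoid a"
  have rho_meas: "(\<lambda>t. \<rho> i \<bar>t\<bar>) \<in> borel_measurable borel" for i
    by (rule continuous_profile_measurable[OF rho_cont])
  have f_cont: "continuous_on UNIV f" and f_support: "compact (closure {x. f x \<noteq> 0})"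
    and f_C1: "\<And>i x. (\<lambda>t. f (upd_coord x i t)) \<in> C1"
    using f_in unfolding Cbar_def by blast+
  obtain C where f_bound: "\<And>x. \<bar>f x\<bar> \<le> C" using compact_support_bounded[OF f_cont f_support] by blast
  have E_borel: "?E \<in> sets borel" using a_pos by (intro ellipsoid_borel) (simp add: less_imp_neq[symmetric])
  have "(\<integral>x. f x \<partial>prod_meas \<rho>) * (\<integral>x. indicator ?E x \<partial>prod_meas \<rho>)
      \<le> (\<integral>x. f x * indicator ?E x \<partial>prod_meas \<rho>)"
  proof (rule harris_inequality_prod_meas[OF rho_meas _ rho_prob _ _ f_bound])
    show "0 \<le> \<rho> i t" if "0 \<le> t" for i t by (rule less_imp_le[OF rho_pos[OF that]])
    show "f \<in> borel_measurable borel" by (rule borel_measurable_continuous_onI[OF f_cont])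
    show "indicator ?E \<in> borel_measurable borel" using E_borel by simp
    show "\<bar>indicator ?E x :: real\<bar> \<le> 1" for x by (simp split: split_indicator)
    show "unimodal_at0 (\<lambda>t. f (upd_coord x i t))" for i x by (rule C1_unimodal_at0[OF f_C1])
    show "symmetric_decreasing (\<lambda>t. indicator ?E (upd_coord x i t))" for i x
      by (rule ellipsoid_section_symmetric_decreasing)
  qed
  moreover have "measure (prod_meas \<rho>) ?E = (\<integral>x. indicator ?E x \<partial>prod_meas \<rho>)"
    using E_borel by (simp add: prod_meas_def)
  ultimately show ?thesis by (simp only:)
qed

end
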